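(* Suppose each $D_{ij}$ is strictly increasing. Let $(\phi,x)$ with binary caching decisions $x_i(k)\in\{0,1\}$ be feasible for the joint routing and caching problem, and suppose it contains a routing loop with strictly positive flow, i.e. a sequence of nodes $(l_1,\dots,l_{m})$ with $l_1=l_m$ and an item $k$ such that $\phi_{l_pl_{p+1}}(k)>0$ for $p=1,\dots,m-1$ and $t_{l_1}(k)>0$. Then there exists a feasible $(\phi',x')$ with $T(\phi',x')<T(\phi,x)$, where $T=\sum_{(i,j)\in\mathcal E}D_{ij}(F_{ij})+\sum_iB_i(Y_i)$.
   Context: Network model. $\mathcal G=(\mathcal V,\mathcal E)$ is a finite directed graph with $(j,i)\in\mathcal E$ whenever $(i,j)\in\mathcal E$; $\mathcal N(i)=\{j:(i,j)\in\mathcal E\}$. $\mathcal C$ is a finite catalog; item $k$ has nonempty designated server set $\mathcal S_k\subseteq\mathcal V$. Exogenous request rates $r_i(k)\ge0$. Variables: $\phi_{ij}(k)\in[0,1]$ with $\phi_{ij}(k)=0$ if $(i,j)\notin\mathcal E$, and caching variables (here binary $x_i(k)$, generally $y_i(k)\in[0,1]$). Flow conservation: $x_i(k)+\sum_{j}\phi_{ij}(k)=1$ if $i\notin\mathcal S_k$ and $=0$ if $i\in\mathcal S_k$. A pair is feasible if it satisfies these constraints and the arrival rates $t_i(k)$, solving $t_i(k)=r_i(k)+\sum_j t_j(k)\phi_{ji}(k)$, are uniquely determined, nonnegative and finite. $f_{ji}(k)=t_i(k)\phi_{ij}(k)$, $F_{ij}=\sum_k f_{ij}(k)$, $Y_i=\sum_k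 x_i(k)$. $D_{ij},B_i$ are continuously differentiable, increasing, convex, zero at $0$. *)

theory Defs
  imports "HOL-Analysis.Analysis"
begin

text \<open>The graph is given by a
finite node set V and an edge set E (pairs). phi i j k is the routing variable,
x i k the caching variable, r i k the exogenous request rate, S k the server set.\<close>

definition network :: "'v set \<Rightarrow> ('v \<times> 'v) set \<Rightarrow> 'k set \<Rightarrow> ('k \<Rightarrow> 'v set)
    \<Rightarrow> ('v \<Rightarrow> 'k \<Rightarrow> real) \<Rightarrow> bool" where
  "network V E C S r \<longleftrightarrow>
     finite V \<and> E \<subseteq> V \<times> V \<and> (\<forall>i j. (i, j) \<in> E \<longrightarrow> (j, i) \<in> E) \<and>
     finite C \<and> (\<forall>k\<in>C. S k \<noteq> {} \<and> S k \<subseteq> V) \<and> (\<forall>i\<in>V. \<forall>k\<in>C. 0 \<le> r i k)"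

definition arrival_eq :: "'v set \<Rightarrow> ('v \<Rightarrow> 'k \<Rightarrow> real) \<Rightarrow> ('v \<Rightarrow> 'v \<Rightarrow> 'k \<Rightarrow> real)
    \<Rightarrow> 'k \<Rightarrow> ('v \<Rightarrow> real) \<Rightarrow> bool" where
  "arrival_eq V r phi k t \<longleftrightarrow>
     (\<forall>i. i \<notin> V \<longrightarrow> t i = 0) \<and>
     (\<forall>i\<in>V. t i = r i k + (\<Sum>j\<in>V. t j * phi j i k))"

definition arrival :: "'v set \<Rightarrow> ('v \<Rightarrow> 'k \<Rightarrow> real) \<Rightarrow> ('v \<Rightarrow> 'v \<Rightarrow> 'k \<Rightarrow> real)
    \<Rightarrow> 'v \<Rightarrow> 'k \<Rightarrow> real" where
  "arrival V r phi i k = (THE t. arrival_eq V r phi k t) i"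

text \<open>Feasibility of a (routing, caching) pair; caching variables in [0,1]
(the binary problem adds x_i(k) in {0,1} separately).\<close>
definition feasible :: "'v set \<Rightarrow> ('v \<times> 'v) set \<Rightarrow> 'k set \<Rightarrow> ('k \<Rightarrow> 'v set)
    \<Rightarrow> ('v \<Rightarrow> 'k \<Rightarrow> real) \<Rightarrow> ('v \<Rightarrow> 'v \<Rightarrow> 'k \<Rightarrow> real) \<Rightarrow> ('v \<Rightarrow> 'k \<Rightarrow> real) \<Rightarrow> bool" where
  "feasible V E C S r phi x \<longleftrightarrow>
     (\<forall>k\<in>C. \<forall>i j. 0 \<le> phi i j k \<and> phi i j k \<le> 1) \<and>
     (\<forall>k\<in>C. \<forall>i j. (i, j) \<notin> E \<longrightarrow> phi i j k = 0) \<and>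
     (\<forall>k\<in>C. \<forall>i\<in>V. 0 \<le> x i k \<and> x i k \<le> 1) \<and>
     (\<forall>k\<in>C. \<forall>i\<in>V. x i k + (\<Sum>j\<in>V. phi i j k) = (if i \<in> S k then 0 else 1)) \<and>
     (\<forall>k\<in>C. \<exists>!t. arrival_eq V r phi k t) \<and>
     (\<forall>k\<in>C. \<forall>i\<in>V. 0 \<le> arrival V r phi i k)"

definition binary_caching :: "'v set \<Rightarrow> 'k set \<Rightarrow> ('v \<Rightarrow> 'k \<Rightarrow> real) \<Rightarrow> bool" where
  "binary_caching V C x \<longleftrightarrow> (\<forall>k\<in>C. \<forall>i\<in>V. x i k = 0 \<or> x i k = 1)"

text \<open>F_ij = sum_k f_ij(k), with f_ji(k) = t_i(k) phi_ij(k), i.e. f_ij(k) = t_j(k) phi_ji(k).\<close>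
definition link_flow :: "'v set \<Rightarrow> 'k set \<Rightarrow> ('v \<Rightarrow> 'k \<Rightarrow> real) \<Rightarrow> ('v \<Rightarrow> 'v \<Rightarrow> 'k \<Rightarrow> real)
    \<Rightarrow> 'v \<Rightarrow> 'v \<Rightarrow> real" where
  "link_flow V C r phi i j = (\<Sum>k\<in>C. arrival V r phi j k * phi j i k)"

definition cache_size :: "'k set \<Rightarrow> ('v \<Rightarrow> 'k \<Rightarrow> real) \<Rightarrow> 'v \<Rightarrow> real" where
  "cache_size C x i = (\<Sum>k\<in>C. x i k)"

definition total_cost :: "'v set \<Rightarrow> ('v \<times> 'v) set \<Rightarrow> 'k set \<Rightarrow> ('v \<Rightarrow> 'k \<Rightarrow> real)
    \<Rightarrow> ('v \<Rightarrow> 'v \<Rightarrow> real \<Rightarrow> real) \<Rightarrow> ('v \<Rightarrow> real \<Rightarrow> real)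
    \<Rightarrow> ('v \<Rightarrow> 'v \<Rightarrow> 'k \<Rightarrow> real) \<Rightarrow> ('v \<Rightarrow> 'k \<Rightarrow> real) \<Rightarrow> real" where
  "total_cost V E C r D B phi x =
     (\<Sum>(i, j)\<in>E. D i j (link_flow V C r phi i j)) + (\<Sum>i\<in>V. B i (cache_size C x i))"

definition cost_function :: "(real \<Rightarrow> real) \<Rightarrow> bool" where
  "cost_function f \<longleftrightarrow>
     f 0 = 0 \<and> mono_on {0..} f \<and> convex_on {0..} f \<and>
     (\<exists>f'. continuous_on {0..} f' \<and>
            (\<forall>z\<ge>0. (f has_real_derivative f' z) (at z within {0..})))"

end

theory Submission
  imports Defs
begin

text \<open>Every link of a routing loop of item k carries positive flow of k, so a small multiple eps
  of the loop circulation can be subtracted: the flow of k on each link drops by eps times the number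
  of traversals, the arrival rate at each node by eps times the number of visits, and new routing
  variables are read off as reduced flow over reduced arrival rate. Caching is unchanged, and the only
  delicate point of feasibility is that the reduced arrival rates are again the unique solution of the
  balance equations. A nonzero homogeneous solution s for the new routing would have a support W that
  is closed and carries a stochastic routing; on the loop the new routing has at least the support of
  the old one, so W is closed for the old routing too. If W misses the loop, |s| is a homogeneous
  solution for the old routing; otherwise, summing the old balance equations over W shows that the old
  arrival rates, cut off outside W, are a homogeneous solution for the old routing, so they vanish,
  contradicting their positivity on the loop. Finally every link flow weakly decreases and a loop
  link strictly, so strictly increasing link costs already give a strictly smaller total cost.\<close>

section \<open>Uniqueness of arrival rates\<close>

definition only_trivial_invariant :: "'v set \<Rightarrow> ('v \<Rightarrow> 'v \<Rightarrow> real) \<Rightarrow> bool" where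
  "only_trivial_invariant V P \<longleftrightarrow>
     (\<forall>u. (\<forall>i. i \<notin> V \<longrightarrow> u i = 0) \<and> (\<forall>i\<in>V. u i = (\<Sum>j\<in>V. u j * P j i)) \<longrightarrow> u = (\<lambda>_. 0))"

lemma only_trivial_invariantI:
  assumes "\<And>u i. (\<And>i. i \<notin> V \<Longrightarrow> u i = 0) \<Longrightarrow> (\<And>i. i \<in> V \<Longrightarrow> u i = (\<Sum>j\<in>V. u j * P j i))
             \<Longrightarrow> u i = 0"
  shows "only_trivial_invariant V P"
  using assms unfolding only_trivial_invariant_def by blast

lemma only_trivial_invariantD:
  assumes "only_trivial_invariant V P" "\<And>i. i \<notin> V \<Longrightarrow> u i = 0"
    and "\<And>i. i \<in> V \<Longrightarrow> u i = (\<Sum>j\<in>V. u j * P j i)"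
  shows "u i = 0"
proof -
  have "u = (\<lambda>_. 0)" using assms unfolding only_trivial_invariant_def by blast
  then show ?thesis by simp
qed

lemma unique_arrival_iff_only_trivial_invariant:
  assumes sol: "arrival_eq V r phi k t"
  shows "(\<exists>!t. arrival_eq V r phi k t) \<longleftrightarrow> only_trivial_invariant V (\<lambda>j i. phi j i k)"
proof
  assume unique: "\<exists>!t. arrival_eq V r phi k t"
  show "only_trivial_invariant V (\<lambda>j i. phi j i k)"
  proof (rule only_trivial_invariantI)
    fix u i
    assume u_out: "\<And>i. i \<notin> V \<Longrightarrow> u i = 0"
      and u_inv: "\<And>i. i \<in> V \<Longrightarrow> u i = (\<Sum>j\<in>V. u j * phi j i k)"
    have "arrival_eq V r phi k (\<lambda>i. t i + u i)"
      unfolding arrival_eq_def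
    proof (intro conjI allI impI ballI)
      show "t i + u i = 0" if "i \<notin> V" for i
        using sol u_out that by (simp add: arrival_eq_def)
      show "t i + u i = r i k + (\<Sum>j\<in>V. (t j + u j) * phi j i k)" if i: "i \<in> V" for i
      proof -
        have "t i = r i k + (\<Sum>j\<in>V. t j * phi j i k)" using sol i unfolding arrival_eq_def by blast
        moreover have "(\<Sum>j\<in>V. (t j + u j) * phi j i k)
            = (\<Sum>j\<in>V. t j * phi j i k) + (\<Sum>j\<in>V. u j * phi j i k)"
          by (simp add: distrib_right sum.distrib)
        ultimately show ?thesis using u_inv[OF i] by linarith
      qed
    qed
    then have "(\<lambda>i. t i + u i) = t" using unique sol by blast
    then show "u i = 0" by (metis add_cancel_left_right)
  qed
next
  assume triv: "only_trivial_invariant V (\<lambda>j i. phi j i k)"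
  show "\<exists>!t. arrival_eq V r phi k t"
  proof (rule ex1I[of "arrival_eq V r phi k" t, OF sol])
    fix t2 assume sol2: "arrival_eq V r phi k t2"
    have "t2 i - t i = 0" for i
    proof (rule only_trivial_invariantD[OF triv, where u = "\<lambda>i. t2 i - t i"])
      show "t2 i - t i = 0" if "i \<notin> V" for i
        using sol sol2 that by (simp add: arrival_eq_def)
      show "t2 i - t i = (\<Sum>j\<in>V. (t2 j - t j) * phi j i k)" if i: "i \<in> V" for i
      proof -
        have "t i = r i k + (\<Sum>j\<in>V. t j * phi j i k)" "t2 i = r i k + (\<Sum>j\<in>V. t2 j * phi j i k)"
          using sol sol2 i unfolding arrival_eq_def by blast+
        moreover have "(\<Sum>j\<in>V. (t2 j - t j) * phi j i k)
            = (\<Sum>j\<in>V. t2 j * phi j i k) - (\<Sum>j\<in>V. t j * phi j i k)"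
          by (simp add: left_diff_distrib sum_subtractf)
        ultimately show ?thesis by linarith
      qed
    qed
    then show "t2 = t" by auto
  qed
qed

lemma arrival_eq_arrival:
  assumes "\<exists>!t. arrival_eq V r phi k t"
  shows "arrival_eq V r phi k (\<lambda>i. arrival V r phi i k)"
  using theI'[OF assms] by (simp add: arrival_def)

lemma arrival_eqI:
  assumes "\<exists>!t. arrival_eq V r phi k t" "arrival_eq V r phi k t"
  shows "arrival V r phi i k = t i"
proof -
  have "(THE t. arrival_eq V r phi k t) = t" using assms by (blast intro: the1_equality)
  then show ?thesis by (simp add: arrival_def)
qed

section \<open>Closed classes of substochastic matrices\<close>

lemma invariant_abs_substochastic:
  fixes P :: "'v \<Rightarrow> 'v \<Rightarrow> real"
  assumes finV: "finite V" and P_nonneg: "\<And>i j. 0 \<le> P j i"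
    and substoch: "\<And>j. j \<in> V \<Longrightarrow> (\<Sum>i\<in>V. P j i) \<le> 1"
    and inv: "\<And>i. i \<in> V \<Longrightarrow> s i = (\<Sum>j\<in>V. s j * P j i)"
  shows "i \<in> V \<Longrightarrow> \<bar>s i\<bar> = (\<Sum>j\<in>V. \<bar>s j\<bar> * P j i)"
    and "j \<in> V \<Longrightarrow> s j \<noteq> 0 \<Longrightarrow> (\<Sum>i\<in>V. P j i) = 1"
    and "j \<in> V \<Longrightarrow> s j \<noteq> 0 \<Longrightarrow> i \<in> V \<Longrightarrow> 0 < P j i \<Longrightarrow> s i \<noteq> 0"
proof -
  have sub: "\<bar>s i\<bar> \<le> (\<Sum>j\<in>V. \<bar>s j\<bar> * P j i)" if "i \<in> V" for i
  proof -
    have "\<bar>s i\<bar> \<le> (\<Sum>j\<in>V. \<bar>s j * P j i\<bar>)" using inv[OF that] sum_abs by metis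
    also have "\<dots> = (\<Sum>j\<in>V. \<bar>s j\<bar> * P j i)" using P_nonneg by (simp add: abs_mult)
    finally show ?thesis .
  qed
  have row_loss: "0 \<le> \<bar>s j\<bar> * (1 - (\<Sum>i\<in>V. P j i))" if "j \<in> V" for j
    using substoch[OF that] by simp
  \<comment> \<open>Summing the pointwise inequalities over V: total mass cannot grow under a substochastic matrix,
      so both the pointwise gaps and the row losses must vanish.\<close>
  have "(\<Sum>i\<in>V. (\<Sum>j\<in>V. \<bar>s j\<bar> * P j i) - \<bar>s i\<bar>) + (\<Sum>j\<in>V. \<bar>s j\<bar> * (1 - (\<Sum>i\<in>V. P j i))) = 0"
  proof -
    have "(\<Sum>i\<in>V. \<Sum>j\<in>V. \<bar>s j\<bar> * P j i) = (\<Sum>j\<in>V. \<bar>s j\<bar> * (\<Sum>i\<in>V. P j i))"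
      by (subst sum.swap) (simp add: sum_distrib_left)
    then show ?thesis by (simp add: sum_subtractf right_diff_distrib)
  qed
  moreover have "0 \<le> (\<Sum>i\<in>V. (\<Sum>j\<in>V. \<bar>s j\<bar> * P j i) - \<bar>s i\<bar>)"
    using sub by (simp add: sum_nonneg)
  moreover have "0 \<le> (\<Sum>j\<in>V. \<bar>s j\<bar> * (1 - (\<Sum>i\<in>V. P j i)))"
    using row_loss by (simp add: sum_nonneg)
  ultimately have gaps: "(\<Sum>i\<in>V. (\<Sum>j\<in>V. \<bar>s j\<bar> * P j i) - \<bar>s i\<bar>) = 0"
    and losses: "(\<Sum>j\<in>V. \<bar>s j\<bar> * (1 - (\<Sum>i\<in>V. P j i))) = 0"
    by linarith+
  have abs_inv: "\<bar>s i\<bar> = (\<Sum>j\<in>V. \<bar>s j\<bar> * P j i)" if "i \<in> V" for i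
    using sum_nonneg_eq_0_iff[OF finV, of "\<lambda>i. (\<Sum>j\<in>V. \<bar>s j\<bar> * P j i) - \<bar>s i\<bar>"] gaps sub that
    by simp
  show "\<bar>s i\<bar> = (\<Sum>j\<in>V. \<bar>s j\<bar> * P j i)" if "i \<in> V"
    using abs_inv[OF that] .
  show "(\<Sum>i\<in>V. P j i) = 1" if "j \<in> V" "s j \<noteq> 0"
    using sum_nonneg_eq_0_iff[OF finV, of "\<lambda>j. \<bar>s j\<bar> * (1 - (\<Sum>i\<in>V. P j i))"] losses row_loss that
    by auto
  show "s i \<noteq> 0" if "j \<in> V" "s j \<noteq> 0" "i \<in> V" "0 < P j i"
  proof -
    have "0 < \<bar>s j\<bar> * P j i" using that by simp
    also have "\<dots> \<le> (\<Sum>j\<in>V. \<bar>s j\<bar> * P j i)"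
      using that finV P_nonneg by (intro member_le_sum) auto
    finally show ?thesis using abs_inv[OF that(3)] by simp
  qed
qed

lemma closed_class_no_inflow:
  fixes P :: "'v \<Rightarrow> 'v \<Rightarrow> real"
  assumes finV: "finite V" and WV: "W \<subseteq> V" and P_nonneg: "\<And>i j. 0 \<le> P j i"
    and stoch_W: "\<And>j. j \<in> W \<Longrightarrow> (\<Sum>i\<in>W. P j i) = 1"
    and sol: "\<And>i. i \<in> V \<Longrightarrow> t i = r i + (\<Sum>j\<in>V. t j * P j i)"
    and r_nonneg: "\<And>i. i \<in> V \<Longrightarrow> 0 \<le> r i" and t_nonneg: "\<And>i. i \<in> V \<Longrightarrow> 0 \<le> t i"
  shows "i \<in> W \<Longrightarrow> r i = 0"
    and "j \<in> V - W \<Longrightarrow> i \<in> W \<Longrightarrow> t j * P j i = 0"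
proof -
  have finW: "finite W" using finV WV finite_subset by blast
  \<comment> \<open>Summing the balance equations over W, the mass of W reproduces itself, so neither
      exogenous input into W nor inflow from V - W is possible.\<close>
  have "(\<Sum>i\<in>W. t i) = (\<Sum>i\<in>W. r i + (\<Sum>j\<in>V. t j * P j i))"
    using sol WV by (intro sum.cong) blast+
  also have "\<dots> = (\<Sum>i\<in>W. r i) + (\<Sum>j\<in>V. t j * (\<Sum>i\<in>W. P j i))"
    by (simp add: sum.distrib sum_distrib_left sum.swap[of _ W V])
  also have "\<dots> = (\<Sum>i\<in>W. r i) + (\<Sum>j\<in>W. t j) + (\<Sum>j\<in>V - W. t j * (\<Sum>i\<in>W. P j i))"
    using sum.subset_diff[OF WV finV, of "\<lambda>j. t j * (\<Sum>i\<in>W. P j i)"] stoch_W by simp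
  finally have balance: "(\<Sum>i\<in>W. r i) + (\<Sum>j\<in>V - W. t j * (\<Sum>i\<in>W. P j i)) = 0" by simp
  have inflow_nonneg: "0 \<le> t j * (\<Sum>i\<in>W. P j i)" if "j \<in> V - W" for j
    using t_nonneg that P_nonneg by (simp add: sum_nonneg)
  have "0 \<le> (\<Sum>i\<in>W. r i)" using r_nonneg WV by (auto intro: sum_nonneg)
  moreover have "0 \<le> (\<Sum>j\<in>V - W. t j * (\<Sum>i\<in>W. P j i))" by (rule sum_nonneg) (rule inflow_nonneg)
  ultimately have "(\<Sum>i\<in>W. r i) = 0" and inflow: "(\<Sum>j\<in>V - W. t j * (\<Sum>i\<in>W. P j i)) = 0"
    using balance by linarith+
  then show "r i = 0" if "i \<in> W"
    using sum_nonneg_eq_0_iff[OF finW, of r] r_nonneg WV that by blast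
  show "t j * P j i = 0" if "j \<in> V - W" "i \<in> W"
  proof -
    have "t j * (\<Sum>i\<in>W. P j i) = 0"
      using inflow sum_nonneg_eq_0_iff[of "V - W" "\<lambda>j. t j * (\<Sum>i\<in>W. P j i)"] inflow_nonneg finV that(1)
      by simp
    moreover have "t j * P j i \<le> t j * (\<Sum>i\<in>W. P j i)"
      using that t_nonneg P_nonneg finW by (intro mult_left_mono member_le_sum) auto
    moreover have "0 \<le> t j * P j i" using that t_nonneg P_nonneg by simp
    ultimately show ?thesis by linarith
  qed
qed

lemma arrival_vanishes_on_closed_class:
  fixes P :: "'v \<Rightarrow> 'v \<Rightarrow> real"
  assumes finV: "finite V" and WV: "W \<subseteq> V" and P_nonneg: "\<And>i j. 0 \<le> P j i"
    and stoch: "\<And>j. j \<in> W \<Longrightarrow> (\<Sum>i\<in>V. P j i) = 1"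
    and closed: "\<And>j i. j \<in> W \<Longrightarrow> i \<in> V - W \<Longrightarrow> P j i = 0"
    and triv: "only_trivial_invariant V P"
    and sol: "\<And>i. i \<in> V \<Longrightarrow> t i = r i + (\<Sum>j\<in>V. t j * P j i)"
    and r_nonneg: "\<And>i. i \<in> V \<Longrightarrow> 0 \<le> r i" and t_nonneg: "\<And>i. i \<in> V \<Longrightarrow> 0 \<le> t i"
    and "l \<in> W"
  shows "t l = 0"
proof -
  have split: "(\<Sum>j\<in>V. f j) = (\<Sum>j\<in>W. f j) + (\<Sum>j\<in>V - W. f j)" for f :: "'v \<Rightarrow> real"
    using sum.subset_diff[OF WV finV] by (simp add: add.commute)
  have stoch_W: "(\<Sum>i\<in>W. P j i) = 1" if "j \<in> W" for j
    using stoch[OF that] split[of "P j"] closed[OF that] by simp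
  note no_inflow = closed_class_no_inflow[OF finV WV P_nonneg stoch_W sol r_nonneg t_nonneg]
  define u where "u i = (if i \<in> W then t i else 0)" for i
  have "u i = 0" for i
  proof (rule only_trivial_invariantD[OF triv])
    show "u i = 0" if "i \<notin> V" for i using that WV by (auto simp: u_def)
    show "u i = (\<Sum>j\<in>V. u j * P j i)" if i: "i \<in> V" for i
    proof -
      have "(\<Sum>j\<in>V. u j * P j i) = (\<Sum>j\<in>W. t j * P j i)"
        using split[of "\<lambda>j. u j * P j i"] by (simp add: u_def)
      also have "\<dots> = u i"
      proof (cases "i \<in> W")
        case True
        then show ?thesis
          using sol[OF i] split[of "\<lambda>j. t j * P j i"] no_inflow by (simp add: u_def)
      next
        case False
        then show ?thesis using closed i by (simp add: u_def)
      qed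
      finally show ?thesis by simp
    qed
  qed
  then show "t l = 0" using \<open>l \<in> W\<close> by (metis u_def)
qed

lemma only_trivial_invariant_perturbation:
  fixes P P' :: "'v \<Rightarrow> 'v \<Rightarrow> real"
  assumes finV: "finite V"
    and P_nonneg: "\<And>i j. 0 \<le> P j i" and P'_nonneg: "\<And>i j. 0 \<le> P' j i"
    and P'_substoch: "\<And>j. j \<in> V \<Longrightarrow> (\<Sum>i\<in>V. P' j i) \<le> 1"
    and unchanged: "\<And>j i. j \<in> V - L \<Longrightarrow> P' j i = P j i"
    and stoch_L: "\<And>j. j \<in> L \<Longrightarrow> (\<Sum>i\<in>V. P j i) = 1"
    and supp_L: "\<And>j i. j \<in> L \<Longrightarrow> 0 < P j i \<Longrightarrow> 0 < P' j i"
    and triv: "only_trivial_invariant V P"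
    and sol: "\<And>i. i \<in> V \<Longrightarrow> t i = r i + (\<Sum>j\<in>V. t j * P j i)"
    and r_nonneg: "\<And>i. i \<in> V \<Longrightarrow> 0 \<le> r i" and t_nonneg: "\<And>i. i \<in> V \<Longrightarrow> 0 \<le> t i"
    and t_pos_L: "\<And>l. l \<in> L \<Longrightarrow> 0 < t l"
  shows "only_trivial_invariant V P'"
proof (rule only_trivial_invariantI)
  fix s i
  assume s_out: "\<And>i. i \<notin> V \<Longrightarrow> s i = 0"
    and s_inv: "\<And>i. i \<in> V \<Longrightarrow> s i = (\<Sum>j\<in>V. s j * P' j i)"
  have abs_inv: "\<bar>s i\<bar> = (\<Sum>j\<in>V. \<bar>s j\<bar> * P' j i)" if "i \<in> V" for i
    using finV P'_nonneg P'_substoch s_inv that by (rule invariant_abs_substochastic(1))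
  have stoch_supp: "(\<Sum>i\<in>V. P' j i) = 1" if "j \<in> V" "s j \<noteq> 0" for j
    using finV P'_nonneg P'_substoch s_inv that by (rule invariant_abs_substochastic(2))
  have supp_closed: "s i \<noteq> 0" if "j \<in> V" "s j \<noteq> 0" "i \<in> V" "0 < P' j i" for i j
    using finV P'_nonneg P'_substoch s_inv that by (rule invariant_abs_substochastic(3))
  define W where "W = {j \<in> V. s j \<noteq> 0}"
  show "s i = 0"
  proof (cases "W \<inter> L = {}")
    case True
    have "\<bar>s i\<bar> = 0"
    proof (rule only_trivial_invariantD[OF triv, where u = "\<lambda>i. \<bar>s i\<bar>"])
      show "\<bar>s i\<bar> = 0" if "i \<notin> V" for i using s_out that by simp
      show "\<bar>s i\<bar> = (\<Sum>j\<in>V. \<bar>s j\<bar> * P j i)" if "i \<in> V" for i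
        unfolding abs_inv[OF that] using True unchanged by (intro sum.cong) (auto simp: W_def)
    qed
    then show ?thesis by simp
  next
    case False
    then obtain l where l: "l \<in> W" "l \<in> L" by blast
    have "t l = 0"
    proof (rule arrival_vanishes_on_closed_class[OF finV _ P_nonneg _ _ triv sol r_nonneg t_nonneg l(1)])
      show "W \<subseteq> V" by (auto simp: W_def)
      show "(\<Sum>i\<in>V. P j i) = 1" if "j \<in> W" for j
      proof (cases "j \<in> L")
        case False
        then have "(\<Sum>i\<in>V. P j i) = (\<Sum>i\<in>V. P' j i)" using unchanged that by (simp add: W_def)
        also have "\<dots> = 1" using stoch_supp that by (simp add: W_def)
        finally show ?thesis .
      qed (use stoch_L in auto)
      \<comment> \<open>W is closed under P' and, since P' only gains support, under P.\<close>
      show "P j i = 0" if "j \<in> W" "i \<in> V - W" for j i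
      proof (rule ccontr)
        assume "P j i \<noteq> 0"
        then have "0 < P' j i"
          using P_nonneg[of j i] supp_L unchanged that by (cases "j \<in> L") (auto simp: W_def)
        then show False using supp_closed that by (auto simp: W_def)
      qed
    qed
    then show ?thesis using t_pos_L[OF l(2)] by simp
  qed
qed

section \<open>Visit counts of a closed walk\<close>

definition walk_edge_count :: "'a list \<Rightarrow> 'a \<Rightarrow> 'a \<Rightarrow> real" where
  "walk_edge_count ls i j = (\<Sum>p<length ls - 1. if ls ! p = i \<and> ls ! Suc p = j then 1 else 0)"

definition walk_visits :: "'a list \<Rightarrow> 'a \<Rightarrow> real" where
  "walk_visits ls i = (\<Sum>p<length ls - 1. if ls ! p = i then 1 else 0)"

lemma walk_edge_count_nonneg [simp]: "0 \<le> walk_edge_count ls i j"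
  by (simp add: walk_edge_count_def sum_nonneg)

lemma walk_visits_nonneg [simp]: "0 \<le> walk_visits ls i"
  by (simp add: walk_visits_def sum_nonneg)

lemma walk_edge_count_le_visits: "walk_edge_count ls i j \<le> walk_visits ls i"
  unfolding walk_edge_count_def walk_visits_def by (rule sum_mono) auto

lemma walk_edge_count_le_length: "walk_edge_count ls i j \<le> real (length ls - 1)"
proof -
  have "walk_edge_count ls i j \<le> of_nat (card {..<length ls - 1}) * 1"
    unfolding walk_edge_count_def by (rule sum_bounded_above) auto
  then show ?thesis by simp
qed

lemma walk_edge_count_pos_imp_step:
  assumes "0 < walk_edge_count ls i j"
  obtains p where "p < length ls - 1" "ls ! p = i" "ls ! Suc p = j"
proof -
  have "\<exists>p<length ls - 1. ls ! p = i \<and> ls ! Suc p = j"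
  proof (rule ccontr)
    assume "\<not> ?thesis"
    then have "walk_edge_count ls i j = 0" unfolding walk_edge_count_def by (intro sum.neutral) auto
    with assms show False by simp
  qed
  then show ?thesis using that by blast
qed

lemma walk_visits_pos_imp_visit:
  assumes "0 < walk_visits ls i"
  obtains p where "p < length ls - 1" "ls ! p = i"
proof -
  have "\<exists>p<length ls - 1. ls ! p = i"
  proof (rule ccontr)
    assume "\<not> ?thesis"
    then have "walk_visits ls i = 0" unfolding walk_visits_def by (intro sum.neutral) auto
    with assms show False by simp
  qed
  then show ?thesis using that by blast
qed

lemma walk_edge_count_step:
  assumes "p < length ls - 1"
  shows "1 \<le> walk_edge_count ls (ls ! p) (ls ! Suc p)"
proof -
  have "(if ls ! p = ls ! p \<and> ls ! Suc p = ls ! Suc p then 1 else 0 :: real)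
       \<le> walk_edge_count ls (ls ! p) (ls ! Suc p)"
    unfolding walk_edge_count_def by (rule member_le_sum) (use assms in auto)
  then show ?thesis by simp
qed

lemma sum_walk_edge_count_out:
  assumes "finite V" "set ls \<subseteq> V"
  shows "(\<Sum>j\<in>V. walk_edge_count ls i j) = walk_visits ls i"
proof -
  have "(\<Sum>j\<in>V. if ls ! p = i \<and> ls ! Suc p = j then 1 else 0 :: real) = (if ls ! p = i then 1 else 0)"
    if "p < length ls - 1" for p
  proof -
    have "ls ! Suc p \<in> V" using assms(2) that by (auto intro: nth_mem)
    then show ?thesis using assms(1) by (simp add: sum.delta conj_commute flip: if_if_eq_conj)
  qed
  then show ?thesis
    unfolding walk_edge_count_def walk_visits_def by (subst sum.swap) simp
qed

lemma sum_walk_edge_count_in: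
  assumes "finite V" "set ls \<subseteq> V" and closed: "hd ls = last ls"
  shows "(\<Sum>j\<in>V. walk_edge_count ls j i) = walk_visits ls i"
proof (cases "ls = []")
  case True
  then show ?thesis by (simp add: walk_edge_count_def walk_visits_def)
next
  case False
  define visit where "visit p = (if ls ! p = i then 1 else 0 :: real)" for p
  have "(\<Sum>j\<in>V. if ls ! p = j \<and> ls ! Suc p = i then 1 else 0 :: real) = visit (Suc p)"
    if "p < length ls - 1" for p
  proof -
    have "ls ! p \<in> V" using assms(2) that by (auto intro: nth_mem)
    then show ?thesis using assms(1) by (simp add: visit_def sum.delta flip: if_if_eq_conj)
  qed
  then have "(\<Sum>j\<in>V. walk_edge_count ls j i) = (\<Sum>p<length ls - 1. visit (Suc p))"
    unfolding walk_edge_count_def by (subst sum.swap) simp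
  \<comment> \<open>The walk is closed, so shifting the index by one only exchanges the first and last visit.\<close>
  also have "\<dots> = (\<Sum>p<length ls - 1. visit p)"
  proof -
    have "visit (length ls - 1) = visit 0"
      using closed False by (simp add: visit_def hd_conv_nth last_conv_nth)
    then show ?thesis using sum_lessThan_telescope[of visit "length ls - 1"] by (simp add: sum_subtractf)
  qed
  finally show ?thesis by (simp add: walk_visits_def visit_def)
qed

lemma link_flow_nonneg:
  assumes net: "network V E C S r" and feas: "feasible V E C S r phi x"
  shows "0 \<le> link_flow V C r phi i j"
  unfolding link_flow_def
proof (rule sum_nonneg)
  fix k assume k: "k \<in> C"
  show "0 \<le> arrival V r phi j k * phi j i k"
  proof (cases "j \<in> V")
    case True
    then show ?thesis using feas k by (auto simp: feasible_def)
  next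
    case False
    then have "(j, i) \<notin> E" using net by (auto simp: network_def)
    then show ?thesis using feas k by (auto simp: feasible_def)
  qed
qed

lemma total_cost_less_if_link_flows_decrease:
  assumes net: "network V E C S r"
    and D_strict: "\<forall>(i, j)\<in>E. strict_mono_on {0..} (D i j)"
    and feas: "feasible V E C S r phi x" and feas': "feasible V E C S r phi' x"
    and le: "\<And>i j. link_flow V C r phi' i j \<le> link_flow V C r phi i j"
    and e: "(i0, j0) \<in> E" and less: "link_flow V C r phi' i0 j0 < link_flow V C r phi i0 j0"
  shows "total_cost V E C r D B phi' x < total_cost V E C r D B phi x"
proof -
  have finE: "finite E"
    using net finite_subset[of E "V \<times> V"] by (auto simp: network_def)
  note nonneg = link_flow_nonneg[OF net feas] link_flow_nonneg[OF net feas']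
  have "(\<Sum>(i, j)\<in>E. D i j (link_flow V C r phi' i j)) < (\<Sum>(i, j)\<in>E. D i j (link_flow V C r phi i j))"
  proof (rule sum_strict_mono_ex1[OF finE])
    show "\<forall>e\<in>E. (case e of (i, j) \<Rightarrow> D i j (link_flow V C r phi' i j))
                 \<le> (case e of (i, j) \<Rightarrow> D i j (link_flow V C r phi i j))"
      using D_strict le nonneg by (auto intro: strict_mono_on_leD)
    have "D i0 j0 (link_flow V C r phi' i0 j0) < D i0 j0 (link_flow V C r phi i0 j0)"
      using D_strict e less nonneg by (auto intro: strict_mono_onD)
    then show "\<exists>e\<in>E. (case e of (i, j) \<Rightarrow> D i j (link_flow V C r phi' i j))
                 < (case e of (i, j) \<Rightarrow> D i j (link_flow V C r phi i j))"
      using e by (intro bexI[of _ "(i0, j0)"]) simp_all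
  qed
  then show ?thesis by (simp add: total_cost_def)
qed

section \<open>Cancelling a routing loop\<close>

locale positive_item_loop =
  fixes V :: "'v set" and E :: "('v \<times> 'v) set" and C :: "'k set" and S :: "'k \<Rightarrow> 'v set"
    and r :: "'v \<Rightarrow> 'k \<Rightarrow> real" and phi :: "'v \<Rightarrow> 'v \<Rightarrow> 'k \<Rightarrow> real" and x :: "'v \<Rightarrow> 'k \<Rightarrow> real"
    and ls :: "'v list" and k :: 'k
  assumes net: "network V E C S r"
    and feas: "feasible V E C S r phi x"
    and bin: "binary_caching V C x"
    and kC: "k \<in> C"
    and len: "length ls \<ge> 2"
    and closed: "hd ls = last ls"
    and loop: "\<forall>p. p + 1 < length ls \<longrightarrow> phi (ls ! p) (ls ! (p + 1)) k > 0"
    and pos: "arrival V r phi (hd ls) k > 0"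
begin

definition t :: "'v \<Rightarrow> real" where
  "t i = arrival V r phi i k"

lemma finite_V: "finite V"
  using net by (simp add: network_def)

lemma E_subset: "E \<subseteq> V \<times> V"
  using net by (simp add: network_def)

lemma phi_nonneg: "0 \<le> phi i j k"
  using feas kC by (simp add: feasible_def)

lemma phi_off_E: "(i, j) \<notin> E \<Longrightarrow> phi i j k = 0"
  using feas kC by (simp add: feasible_def)

lemma unique_arrival: "\<exists>!t. arrival_eq V r phi k t"
  using feas kC by (simp add: feasible_def)

lemma t_solves: "arrival_eq V r phi k t"
  using arrival_eq_arrival[OF unique_arrival] by (simp add: t_def[abs_def])

lemma t_balance: "i \<in> V \<Longrightarrow> t i = r i k + (\<Sum>j\<in>V. t j * phi j i k)"
  using t_solves by (simp add: arrival_eq_def)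

lemma r_nonneg: "i \<in> V \<Longrightarrow> 0 \<le> r i k"
  using net kC by (simp add: network_def)

lemma t_nonneg: "0 \<le> t i"
proof (cases "i \<in> V")
  case True
  then show ?thesis using feas kC by (simp add: feasible_def t_def)
next
  case False
  then show ?thesis using t_solves by (simp add: arrival_eq_def)
qed

lemma loop_phi_pos: "p < length ls - 1 \<Longrightarrow> 0 < phi (ls ! p) (ls ! Suc p) k"
  using loop by simp

lemma loop_edge: "p < length ls - 1 \<Longrightarrow> (ls ! p, ls ! Suc p) \<in> E"
  using loop_phi_pos phi_off_E by (metis less_irrefl)

lemma loop_wraps: "ls ! (length ls - 1) = ls ! 0"
proof -
  have "ls \<noteq> []" using len by auto
  then show ?thesis using closed by (simp add: hd_conv_nth last_conv_nth)
qed

lemma set_loop_subset: "set ls \<subseteq> V"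
proof
  fix i assume "i \<in> set ls"
  then obtain q where q: "q < length ls" "ls ! q = i" by (auto simp: in_set_conv_nth)
  obtain p where "p < length ls - 1" "ls ! p = i"
  proof (cases "q < length ls - 1")
    case False
    then have "q = length ls - 1" using q(1) by simp
    then show ?thesis using that[of 0] q(2) loop_wraps len by simp
  qed (use that q in blast)
  then show "i \<in> V" using loop_edge E_subset by blast
qed

lemma loop_arrival_pos: "p < length ls \<Longrightarrow> 0 < t (ls ! p)"
proof (induction p)
  case 0
  then show ?case using pos len by (simp add: t_def hd_conv_nth)
next
  case (Suc p)
  then have p: "p < length ls - 1" by simp
  have V: "ls ! p \<in> V" "ls ! Suc p \<in> V" using loop_edge[OF p] E_subset by auto
  have "0 < t (ls ! p) * phi (ls ! p) (ls ! Suc p) k"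
    using Suc.IH p loop_phi_pos[OF p] by simp
  also have "\<dots> \<le> (\<Sum>j\<in>V. t j * phi j (ls ! Suc p) k)"
    using V finite_V t_nonneg phi_nonneg by (intro member_le_sum) auto
  also have "\<dots> \<le> t (ls ! Suc p)"
    using t_balance[OF V(2)] r_nonneg[OF V(2)] by simp
  finally show ?case .
qed

lemma visited_node:
  assumes "0 < walk_visits ls i"
  shows "i \<in> V" "0 < t i" "(\<Sum>j\<in>V. phi i j k) = 1"
proof -
  obtain p where p: "p < length ls - 1" "ls ! p = i"
    using assms by (rule walk_visits_pos_imp_visit)
  show iV: "i \<in> V" using loop_edge[OF p(1)] E_subset p(2) by auto
  have "p < length ls" using p(1) by simp
  then show "0 < t i" using loop_arrival_pos p(2) by blast
  have "0 < phi i (ls ! Suc p) k" using loop_phi_pos[OF p(1)] p(2) by simp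
  also have "\<dots> \<le> (\<Sum>j\<in>V. phi i j k)"
    using set_loop_subset p finite_V phi_nonneg by (intro member_le_sum) (auto intro: nth_mem)
  finally have "0 < (\<Sum>j\<in>V. phi i j k)" .
  \<comment> \<open>With binary caching, a node forwarding some of the item caches none of it.\<close>
  moreover have "x i k + (\<Sum>j\<in>V. phi i j k) = (if i \<in> S k then 0 else 1)"
    using feas kC iV by (simp add: feasible_def)
  moreover have "x i k = 0 \<or> x i k = 1" using bin kC iV by (simp add: binary_caching_def)
  ultimately show "(\<Sum>j\<in>V. phi i j k) = 1" by (auto split: if_splits)
qed

definition min_loop_flow :: real where
  "min_loop_flow = Min ((\<lambda>p. t (ls ! p) * phi (ls ! p) (ls ! Suc p) k) ` {..<length ls - 1})"

text \<open>An edge is traversed at most length ls - 1 times by the loop, so removing eps per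
  traversal keeps every loop flow positive.\<close>
definition eps :: real where
  "eps = min_loop_flow / real (length ls)"

definition reduced_flow :: "'v \<Rightarrow> 'v \<Rightarrow> real" where
  "reduced_flow i j = t i * phi i j k - eps * walk_edge_count ls i j"

definition reduced_arrival :: "'v \<Rightarrow> real" where
  "reduced_arrival i = t i - eps * walk_visits ls i"

definition rerouted :: "'v \<Rightarrow> 'v \<Rightarrow> 'k \<Rightarrow> real" where
  "rerouted i j k' =
     (if k' = k \<and> 0 < walk_visits ls i then reduced_flow i j / reduced_arrival i else phi i j k')"

lemma min_loop_flow_pos: "0 < min_loop_flow"
proof -
  have "0 \<in> {..<length ls - 1}" using len by simp
  then have "{..<length ls - 1} \<noteq> {}" by blast
  then show ?thesis
    unfolding min_loop_flow_def using loop_arrival_pos loop_phi_pos by (subst Min_gr_iff) auto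
qed

lemma eps_pos: "0 < eps"
proof -
  have "ls \<noteq> []" using len by auto
  then have "0 < real (length ls)" by simp
  then show ?thesis using min_loop_flow_pos by (simp add: eps_def)
qed

lemma reduced_flow_pos:
  assumes "0 < walk_edge_count ls i j"
  shows "0 < reduced_flow i j"
proof -
  obtain p where p: "p < length ls - 1" "ls ! p = i" "ls ! Suc p = j"
    using assms by (rule walk_edge_count_pos_imp_step)
  have "eps * walk_edge_count ls i j \<le> eps * real (length ls - 1)"
    using eps_pos walk_edge_count_le_length by (simp add: mult_left_mono)
  also have "\<dots> = min_loop_flow - eps"
  proof -
    have "ls \<noteq> []" using len by auto
    then have "real (length ls) \<noteq> 0" by simp
    then show ?thesis using len by (simp add: eps_def of_nat_diff field_simps)
  qed
  also have "\<dots> < min_loop_flow"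
    using eps_pos by simp
  also have "\<dots> \<le> t i * phi i j k"
    unfolding min_loop_flow_def using p by (intro Min_le) auto
  finally show ?thesis by (simp add: reduced_flow_def)
qed

lemma reduced_flow_nonneg: "0 \<le> reduced_flow i j"
proof (cases "0 < walk_edge_count ls i j")
  case True
  then show ?thesis using reduced_flow_pos by fastforce
next
  case False
  then have "walk_edge_count ls i j = 0" using walk_edge_count_nonneg[of ls i j] by linarith
  then show ?thesis using t_nonneg phi_nonneg by (simp add: reduced_flow_def)
qed

lemma reduced_flow_off_E:
  assumes "(i, j) \<notin> E"
  shows "reduced_flow i j = 0"
proof -
  have "\<not> 0 < walk_edge_count ls i j"
    using assms loop_edge by (metis walk_edge_count_pos_imp_step)
  then have "walk_edge_count ls i j = 0"
    using walk_edge_count_nonneg[of ls i j] by linarith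
  then show ?thesis using phi_off_E[OF assms] by (simp add: reduced_flow_def)
qed

lemma reduced_arrival_out:
  assumes "0 < walk_visits ls i"
  shows "reduced_arrival i = (\<Sum>j\<in>V. reduced_flow i j)"
  using visited_node(3)[OF assms] sum_walk_edge_count_out[OF finite_V set_loop_subset]
  by (simp add: reduced_flow_def reduced_arrival_def sum_subtractf flip: sum_distrib_left)

lemma reduced_arrival_pos:
  assumes "0 < walk_visits ls i"
  shows "0 < reduced_arrival i"
proof -
  obtain p where p: "p < length ls - 1" "ls ! p = i"
    using assms by (rule walk_visits_pos_imp_visit)
  have "0 < reduced_flow i (ls ! Suc p)"
    using reduced_flow_pos walk_edge_count_step[OF p(1)] p(2) by force
  also have "\<dots> \<le> (\<Sum>j\<in>V. reduced_flow i j)"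
    using set_loop_subset p finite_V reduced_flow_nonneg by (intro member_le_sum) (auto intro: nth_mem)
  finally show ?thesis using reduced_arrival_out[OF assms] by simp
qed

lemma reduced_arrival_nonneg: "0 \<le> reduced_arrival i"
proof (cases "0 < walk_visits ls i")
  case True
  then show ?thesis using reduced_arrival_pos by fastforce
next
  case False
  then have "walk_visits ls i = 0" using walk_visits_nonneg[of ls i] by linarith
  then show ?thesis using t_nonneg by (simp add: reduced_arrival_def)
qed

lemma rerouted_flow: "reduced_arrival i * rerouted i j k = reduced_flow i j"
proof (cases "0 < walk_visits ls i")
  case True
  then show ?thesis using reduced_arrival_pos[OF True] by (simp add: rerouted_def)
next
  case False
  then have "walk_visits ls i = 0" "walk_edge_count ls i j = 0"
    using walk_edge_count_le_visits[of ls i j] walk_edge_count_nonneg[of ls i j]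
      walk_visits_nonneg[of ls i] by linarith+
  with False show ?thesis by (simp add: rerouted_def reduced_arrival_def reduced_flow_def)
qed

lemma rerouted_other_item: "k' \<noteq> k \<Longrightarrow> rerouted i j k' = phi i j k'"
  by (simp add: rerouted_def)

lemma rerouted_bounds:
  assumes "k' \<in> C"
  shows "0 \<le> rerouted i j k' \<and> rerouted i j k' \<le> 1"
proof (cases "k' = k \<and> 0 < walk_visits ls i")
  case True
  then have vis: "0 < walk_visits ls i" by simp
  have "reduced_flow i j \<le> reduced_arrival i"
  proof (cases "j \<in> V")
    case True
    then show ?thesis
      unfolding reduced_arrival_out[OF vis]
      using finite_V reduced_flow_nonneg by (intro member_le_sum) auto
  next
    case False
    then have "(i, j) \<notin> E" using E_subset by auto
    then show ?thesis using reduced_flow_off_E reduced_arrival_nonneg by simp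
  qed
  then show ?thesis
    using True reduced_arrival_pos[OF vis] reduced_flow_nonneg[of i j] by (simp add: rerouted_def)
next
  case False
  then show ?thesis using feas assms by (auto simp: rerouted_def feasible_def)
qed

lemma rerouted_off_E: "k' \<in> C \<Longrightarrow> (i, j) \<notin> E \<Longrightarrow> rerouted i j k' = 0"
  using feas reduced_flow_off_E by (auto simp: rerouted_def feasible_def)

lemma rerouted_conservation:
  assumes "k' \<in> C" "i \<in> V"
  shows "x i k' + (\<Sum>j\<in>V. rerouted i j k') = (if i \<in> S k' then 0 else 1)"
proof (cases "k' = k \<and> 0 < walk_visits ls i")
  case True
  then have vis: "0 < walk_visits ls i" by simp
  have "(\<Sum>j\<in>V. rerouted i j k') = (\<Sum>j\<in>V. reduced_flow i j) / reduced_arrival i"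
    using True by (simp add: rerouted_def sum_divide_distrib)
  also have "\<dots> = (\<Sum>j\<in>V. phi i j k)"
    using reduced_arrival_out[OF vis] reduced_arrival_pos[OF vis] visited_node(3)[OF vis] by simp
  finally have "(\<Sum>j\<in>V. rerouted i j k') = (\<Sum>j\<in>V. phi i j k)" .
  with True show ?thesis using feas assms by (simp add: feasible_def)
next
  case False
  then show ?thesis using feas assms by (auto simp: rerouted_def feasible_def)
qed

lemma reduced_arrival_solves: "arrival_eq V r rerouted k reduced_arrival"
  unfolding arrival_eq_def
proof (intro conjI allI impI ballI)
  fix i
  assume "i \<notin> V"
  then have "walk_visits ls i = 0"
    using visited_node(1) walk_visits_nonneg[of ls i] by (metis less_eq_real_def)
  then show "reduced_arrival i = 0"
    using t_solves \<open>i \<notin> V\<close> by (simp add: reduced_arrival_def arrival_eq_def)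
next
  fix i
  assume i: "i \<in> V"
  \<comment> \<open>The loop is a circulation: it enters each node as often as it leaves it.\<close>
  have "(\<Sum>j\<in>V. reduced_arrival j * rerouted j i k) = (\<Sum>j\<in>V. t j * phi j i k) - eps * walk_visits ls i"
    using sum_walk_edge_count_in[OF finite_V set_loop_subset closed]
    by (simp add: rerouted_flow reduced_flow_def sum_subtractf flip: sum_distrib_left)
  then show "reduced_arrival i = r i k + (\<Sum>j\<in>V. reduced_arrival j * rerouted j i k)"
    using t_balance[OF i] by (simp add: reduced_arrival_def)
qed

lemma rerouted_only_trivial_invariant: "only_trivial_invariant V (\<lambda>j i. rerouted j i k)"
proof (rule only_trivial_invariant_perturbation[where L = "{i. 0 < walk_visits ls i}"])
  show "finite V" by (rule finite_V)
  show "0 \<le> phi j i k" for i j by (rule phi_nonneg)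
  show "0 \<le> rerouted j i k" for i j using rerouted_bounds kC by blast
  show "(\<Sum>i\<in>V. rerouted j i k) \<le> 1" if "j \<in> V" for j
  proof -
    have "0 \<le> x j k" using feas kC that by (simp add: feasible_def)
    then show ?thesis using rerouted_conservation[OF kC that] by (auto split: if_splits)
  qed
  show "rerouted j i k = phi j i k" if "j \<in> V - {i. 0 < walk_visits ls i}" for j i
    using that by (simp add: rerouted_def)
  show "(\<Sum>i\<in>V. phi j i k) = 1" if "j \<in> {i. 0 < walk_visits ls i}" for j
    using that visited_node(3) by blast
  show "0 < rerouted j i k" if "j \<in> {i. 0 < walk_visits ls i}" "0 < phi j i k" for j i
  proof -
    have "0 < reduced_flow j i"
    proof (cases "0 < walk_edge_count ls j i")
      case False
      then have "walk_edge_count ls j i = 0" using walk_edge_count_nonneg[of ls j i] by linarith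
      then show ?thesis
        using that visited_node(2)[of j] by (simp add: reduced_flow_def)
    qed (rule reduced_flow_pos)
    then show ?thesis using that reduced_arrival_pos by (simp add: rerouted_def)
  qed
  show "only_trivial_invariant V (\<lambda>j i. phi j i k)"
    using unique_arrival_iff_only_trivial_invariant[OF t_solves] unique_arrival by blast
  show "t i = r i k + (\<Sum>j\<in>V. t j * phi j i k)" if "i \<in> V" for i
    using t_balance[OF that] .
  show "0 \<le> r i k" if "i \<in> V" for i using r_nonneg[OF that] .
  show "0 \<le> t i" for i by (rule t_nonneg)
  show "0 < t l" if "l \<in> {i. 0 < walk_visits ls i}" for l using that visited_node(2) by blast
qed

lemma unique_rerouted_arrival: "\<exists>!t. arrival_eq V r rerouted k t"
  using unique_arrival_iff_only_trivial_invariant[OF reduced_arrival_solves]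
    rerouted_only_trivial_invariant by blast

lemma arrival_rerouted: "arrival V r rerouted i k = reduced_arrival i"
  using unique_rerouted_arrival reduced_arrival_solves by (rule arrival_eqI)

lemma arrival_eq_rerouted_other_item:
  "k' \<noteq> k \<Longrightarrow> arrival_eq V r rerouted k' = arrival_eq V r phi k'"
  by (simp add: arrival_eq_def rerouted_other_item fun_eq_iff)

lemma arrival_rerouted_other_item:
  "k' \<noteq> k \<Longrightarrow> arrival V r rerouted i k' = arrival V r phi i k'"
  by (simp add: arrival_def arrival_eq_rerouted_other_item)

lemma rerouted_feasible: "feasible V E C S r rerouted x"
  unfolding feasible_def
proof (intro conjI ballI allI impI)
  fix k' assume k': "k' \<in> C"
  show "0 \<le> rerouted i j k'" "rerouted i j k' \<le> 1" for i j
    using rerouted_bounds[OF k'] by auto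
  show "rerouted i j k' = 0" if "(i, j) \<notin> E" for i j
    using rerouted_off_E[OF k' that] .
  show "0 \<le> x i k'" "x i k' \<le> 1" if "i \<in> V" for i
    using feas k' that by (auto simp: feasible_def)
  show "x i k' + (\<Sum>j\<in>V. rerouted i j k') = (if i \<in> S k' then 0 else 1)" if "i \<in> V" for i
    using rerouted_conservation[OF k' that] .
  show "\<exists>!t. arrival_eq V r rerouted k' t"
    using unique_rerouted_arrival arrival_eq_rerouted_other_item feas k'
    by (cases "k' = k") (auto simp: feasible_def)
  show "0 \<le> arrival V r rerouted i k'" if "i \<in> V" for i
    using arrival_rerouted reduced_arrival_nonneg arrival_rerouted_other_item feas k' that
    by (cases "k' = k") (auto simp: feasible_def)
qed

lemma link_flow_rerouted:
  "link_flow V C r rerouted i j = link_flow V C r phi i j - eps * walk_edge_count ls j i"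
proof -
  have "arrival V r rerouted j k' * rerouted j i k'
      = arrival V r phi j k' * phi j i k' - (if k' = k then eps * walk_edge_count ls j i else 0)" for k'
  proof (cases "k' = k")
    case True
    then show ?thesis using rerouted_flow by (simp add: arrival_rerouted reduced_flow_def t_def)
  next
    case False
    then show ?thesis by (simp add: arrival_rerouted_other_item rerouted_other_item)
  qed
  then show ?thesis
    using net kC by (simp add: link_flow_def sum_subtractf network_def)
qed

end

theorem mainTheorem7:
  fixes V :: "'v set" and E :: "('v \<times> 'v) set" and C :: "'k set" and S :: "'k \<Rightarrow> 'v set"
    and r :: "'v \<Rightarrow> 'k \<Rightarrow> real"
    and D :: "'v \<Rightarrow> 'v \<Rightarrow> real \<Rightarrow> real" and B :: "'v \<Rightarrow> real \<Rightarrow> real"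
    and phi :: "'v \<Rightarrow> 'v \<Rightarrow> 'k \<Rightarrow> real" and x :: "'v \<Rightarrow> 'k \<Rightarrow> real"
    and ls :: "'v list" and k :: 'k
  assumes net: "network V E C S r"
    and D_cost: "\<forall>(i, j)\<in>E. cost_function (D i j)"
    and B_cost: "\<forall>i\<in>V. cost_function (B i)"
    and D_strict: "\<forall>(i, j)\<in>E. strict_mono_on {0..} (D i j)"
    and feas: "feasible V E C S r phi x"
    and bin: "binary_caching V C x"
    and kC: "k \<in> C"
    and len: "length ls \<ge> 2"
    and closed: "hd ls = last ls"
    and loop: "\<forall>p. p + 1 < length ls \<longrightarrow> phi (ls ! p) (ls ! (p + 1)) k > 0"
    and pos: "arrival V r phi (hd ls) k > 0"
  shows "\<exists>phi' x'. feasible V E C S r phi' x' \<and> binary_caching V C x' \<and>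
           total_cost V E C r D B phi' x' < total_cost V E C r D B phi x"
proof -
  interpret positive_item_loop V E C S r phi x ls k
    using net feas bin kC len closed loop pos by unfold_locales
  have first_step: "0 < length ls - 1" using len by simp
  \<comment> \<open>link_flow i j carries the flow from j to i, so the first loop edge shows up reversed.\<close>
  have e: "(ls ! 1, ls ! 0) \<in> E"
    using loop_edge[OF first_step] net by (simp add: network_def)
  have "total_cost V E C r D B rerouted x < total_cost V E C r D B phi x"
  proof (rule total_cost_less_if_link_flows_decrease[OF net D_strict feas rerouted_feasible _ e])
    show "link_flow V C r rerouted i j \<le> link_flow V C r phi i j" for i j
      using eps_pos by (simp add: link_flow_rerouted)
    show "link_flow V C r rerouted (ls ! 1) (ls ! 0) < link_flow V C r phi (ls ! 1) (ls ! 0)"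
      using eps_pos walk_edge_count_step[OF first_step] by (simp add: link_flow_rerouted)
  qed
  then show ?thesis using rerouted_feasible bin by blast
qed

end
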